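(* $\mathrm{DCFL}\not\subseteq \mathrm{REG}/n$. Equivalently, $\mathrm{REG}/n\neq\mathrm{DCFL}/n$.
   Context: $\mathrm{REG}$ is the family of regular languages and $\mathrm{DCFL}$ the family of deterministic context-free languages. An advice function is a map $h:\mathbb{N}\to\Gamma^*$, for some alphabet $\Gamma$, with $|h(n)|=n$ for all $n$. For strings $x=x_1\cdots x_n$ and $w=\sigma_1\cdots\sigma_n$ of the same length, $\begin{bmatrix}x\\ w\end{bmatrix}$ denotes the string $\begin{bmatrix}x_1\\ \sigma_1\end{bmatrix}\cdots\begin{bmatrix}x_n\\ \sigma_n\end{bmatrix}$ over the product alphabet of pairs of symbols. For a family $\mathcal{C}$ of languages, $\mathcal{C}/n$ is the family of all languages $L$ over an alphabet $\Sigma$ for which there exist an advice function $h$ and a language $L'\in\mathcal{C}$ such that for all $x\in\Sigma^*$: $x\in L$ iff $\begin{bmatrix}x\\ h(|x|)\end{bmatrix}\in L'$. *)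

theory Defs
  imports Main
begin

definition dfa_lang ::
  "'a set \<Rightarrow> (nat \<Rightarrow> 'a \<Rightarrow> nat) \<Rightarrow> nat \<Rightarrow> nat set \<Rightarrow> 'a list set" where
  "dfa_lang \<Sigma> \<delta> q0 F = {w \<in> lists \<Sigma>. foldl \<delta> q0 w \<in> F}"

definition regular_on :: "'a set \<Rightarrow> 'a list set \<Rightarrow> bool" where
  "regular_on \<Sigma> L \<longleftrightarrow> finite \<Sigma> \<and>
     (\<exists>(Q::nat set) \<delta> q0 F. finite Q \<and> q0 \<in> Q \<and> F \<subseteq> Q \<and>
        (\<forall>q\<in>Q. \<forall>a\<in>\<Sigma>. \<delta> q a \<in> Q) \<and> L = dfa_lang \<Sigma> \<delta> q0 F)"

text \<open>Transition function: state, input symbol or epsilon (None), top stack symbol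
  gives optionally a new state and a string replacing the top stack symbol.\<close>

type_synonym 'a dpda_trans = "nat \<Rightarrow> 'a option \<Rightarrow> nat \<Rightarrow> (nat \<times> nat list) option"

definition pda_step ::
  "'a dpda_trans \<Rightarrow> (nat \<times> 'a list \<times> nat list) \<Rightarrow> (nat \<times> 'a list \<times> nat list) \<Rightarrow> bool" where
  "pda_step \<delta> c c' \<longleftrightarrow>
     (\<exists>q w Z \<gamma> p \<beta>. c = (q, w, Z # \<gamma>) \<and> c' = (p, w, \<beta> @ \<gamma>) \<and> \<delta> q None Z = Some (p, \<beta>)) \<or>
     (\<exists>q a w Z \<gamma> p \<beta>. c = (q, a # w, Z # \<gamma>) \<and> c' = (p, w, \<beta> @ \<gamma>) \<and> \<delta> q (Some a) Z = Some (p, \<beta>))"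

definition is_dpda ::
  "'a set \<Rightarrow> nat set \<Rightarrow> nat set \<Rightarrow> 'a dpda_trans \<Rightarrow> nat \<Rightarrow> nat \<Rightarrow> nat set \<Rightarrow> bool" where
  "is_dpda \<Sigma> Q \<Gamma> \<delta> q0 Z0 F \<longleftrightarrow>
     finite \<Sigma> \<and> finite Q \<and> finite \<Gamma> \<and> q0 \<in> Q \<and> Z0 \<in> \<Gamma> \<and> F \<subseteq> Q \<and>
     (\<forall>q x Z p \<beta>. \<delta> q x Z = Some (p, \<beta>) \<longrightarrow>
         q \<in> Q \<and> Z \<in> \<Gamma> \<and> (\<forall>a. x = Some a \<longrightarrow> a \<in> \<Sigma>) \<and> p \<in> Q \<and> set \<beta> \<subseteq> \<Gamma>) \<and>
     (\<forall>q Z. \<delta> q None Z \<noteq> None \<longrightarrow> (\<forall>a. \<delta> q (Some a) Z = None))"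

definition dpda_lang :: "'a set \<Rightarrow> 'a dpda_trans \<Rightarrow> nat \<Rightarrow> nat \<Rightarrow> nat set \<Rightarrow> 'a list set" where
  "dpda_lang \<Sigma> \<delta> q0 Z0 F =
     {w \<in> lists \<Sigma>. \<exists>q \<gamma>. q \<in> F \<and> (pda_step \<delta>)\<^sup>*\<^sup>* (q0, w, [Z0]) (q, [], \<gamma>)}"

definition dcfl_on :: "'a set \<Rightarrow> 'a list set \<Rightarrow> bool" where
  "dcfl_on \<Sigma> L \<longleftrightarrow>
     (\<exists>Q \<Gamma> \<delta> q0 Z0 F. is_dpda \<Sigma> Q \<Gamma> \<delta> q0 Z0 F \<and> L = dpda_lang \<Sigma> \<delta> q0 Z0 F)"

text \<open>L over \<Sigma> is in REG/n iff there are a finite advice alphabet \<Gamma>, an advice function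
  h with |h n| = n, and a regular L' over \<Sigma> \<times> \<Gamma> such that x \<in> L iff the
  track word [x; h |x|] (= zip) is in L'.\<close>

definition reg_advice_on :: "'a set \<Rightarrow> 'a list set \<Rightarrow> bool" where
  "reg_advice_on \<Sigma> L \<longleftrightarrow>
     (\<exists>(\<Gamma>::nat set) (h::nat \<Rightarrow> nat list) (L'::('a \<times> nat) list set).
        finite \<Gamma> \<and> (\<forall>n. length (h n) = n \<and> set (h n) \<subseteq> \<Gamma>) \<and>
        regular_on (\<Sigma> \<times> \<Gamma>) L' \<and>
        (\<forall>x \<in> lists \<Sigma>. x \<in> L \<longleftrightarrow> zip x (h (length x)) \<in> L'))"

end

theory Submission
  imports Defs
begin

text \<open>The marked palindromes \<open>w 2 w\<^sup>R\<close> with \<open>w \<in> {0,1}\<^sup>*\<close> are accepted by a DPDA that pushes \<open>w\<close>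
  and pops it against \<open>w\<^sup>R\<close>. They are not in REG/n: with advice fixed for the length \<open>2m + 1\<close>,
  a DFA with at most \<open>m\<close> states must reach the same state after two different prefixes
  \<open>w\<^sub>1 \<noteq> w\<^sub>2\<close> of length \<open>m\<close>, so it cannot tell \<open>w\<^sub>1 2 w\<^sub>2\<^sup>R\<close> from \<open>w\<^sub>2 2 w\<^sub>2\<^sup>R\<close>.\<close>

definition separable_by_suffixes :: "'a set \<Rightarrow> 'a list set \<Rightarrow> nat \<Rightarrow> 'a list set \<Rightarrow> bool" where
  "separable_by_suffixes \<Sigma> L l X \<longleftrightarrow>
     (\<forall>x\<in>X. \<forall>y\<in>X. x \<noteq> y \<longrightarrow> (\<exists>z \<in> lists \<Sigma>. length z = l \<and> (x @ z \<in> L) \<noteq> (y @ z \<in> L)))"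

lemma foldl_in_closed_set:
  assumes "\<forall>q\<in>Q. \<forall>a\<in>A. \<delta> q a \<in> Q" "q \<in> Q" "xs \<in> lists A"
  shows "foldl \<delta> q xs \<in> Q"
  using assms by (induction xs arbitrary: q) auto

lemma zip_in_lists: "xs \<in> lists A \<Longrightarrow> ys \<in> lists B \<Longrightarrow> zip xs ys \<in> lists (A \<times> B)"
  by (auto dest: set_zip_leftD set_zip_rightD)

lemma reg_advice_on_separable_words_bounded:
  assumes "reg_advice_on \<Sigma> L"
  obtains m :: nat where
    "\<And>k l X. X \<subseteq> {x \<in> lists \<Sigma>. length x = k} \<Longrightarrow> separable_by_suffixes \<Sigma> L l X \<Longrightarrow> card X \<le> m"
proof -
  from assms obtain \<Gamma> :: "nat set" and h :: "nat \<Rightarrow> nat list" and L' where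
    h: "\<forall>n. length (h n) = n \<and> set (h n) \<subseteq> \<Gamma>" and reg: "regular_on (\<Sigma> \<times> \<Gamma>) L'"
    and L: "\<forall>x \<in> lists \<Sigma>. x \<in> L \<longleftrightarrow> zip x (h (length x)) \<in> L'"
    unfolding reg_advice_on_def by blast
  from reg obtain Q :: "nat set" and \<delta> q0 F where "finite Q" "q0 \<in> Q"
    and closed: "\<forall>q\<in>Q. \<forall>a\<in>\<Sigma> \<times> \<Gamma>. \<delta> q a \<in> Q" and L': "L' = dfa_lang (\<Sigma> \<times> \<Gamma>) \<delta> q0 F"
    unfolding regular_on_def by blast
  have "card X \<le> card Q"
    if X: "X \<subseteq> {x \<in> lists \<Sigma>. length x = k}" and sep: "separable_by_suffixes \<Sigma> L l X" for k l X
  proof -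
    define H where "H = h (k + l)"
    have H: "length H = k + l" "H \<in> lists \<Gamma>" using h unfolding H_def by auto
    define state where "state x = foldl \<delta> q0 (zip x (take k H))" for x
    \<comment> \<open>Beyond the prefix the DFA sees only its state and the common advice \<open>drop k H\<close>.\<close>
    have run: "x @ z \<in> L \<longleftrightarrow> foldl \<delta> (state x) (zip z (drop k H)) \<in> F"
      if "x \<in> X" "z \<in> lists \<Sigma>" "length z = l" for x z
    proof -
      have x: "x \<in> lists \<Sigma>" "length x = k" using that(1) X by auto
      have "zip (x @ z) (h (length (x @ z))) = zip x (take k H) @ zip z (drop k H)"
        using x that(3) by (simp add: H_def zip_append1)
      moreover have "zip (x @ z) H \<in> lists (\<Sigma> \<times> \<Gamma>)"
        using x that(2) H(2) by (simp add: zip_in_lists)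
      ultimately show ?thesis
        using L x that by (simp add: H_def L' dfa_lang_def state_def)
    qed
    have "inj_on state X"
    proof (rule inj_onI, rule ccontr)
      fix x y assume "x \<in> X" "y \<in> X" "state x = state y" "x \<noteq> y"
      moreover from this sep obtain z where "z \<in> lists \<Sigma>" "length z = l" "(x @ z \<in> L) \<noteq> (y @ z \<in> L)"
        unfolding separable_by_suffixes_def by blast
      ultimately show False using run[of x z] run[of y z] by simp
    qed
    moreover have "state ` X \<subseteq> Q"
    proof (rule image_subsetI)
      fix x assume "x \<in> X"
      from \<open>x \<in> X\<close> X have "x \<in> lists \<Sigma>" by blast
      moreover have "take k H \<in> lists \<Gamma>" using H(2) by (auto dest: in_set_takeD)
      ultimately have "zip x (take k H) \<in> lists (\<Sigma> \<times> \<Gamma>)" by (rule zip_in_lists)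
      then show "state x \<in> Q" unfolding state_def by (rule foldl_in_closed_set[OF closed \<open>q0 \<in> Q\<close>])
    qed
    ultimately show ?thesis using card_inj_on_le \<open>finite Q\<close> by blast
  qed
  then show thesis by (rule that)
qed

definition marked_palindromes :: "nat list set" where
  "marked_palindromes = {w @ 2 # rev w | w. set w \<subseteq> {0, 1}}"

lemma marked_palindromes_not_reg_advice: "\<not> reg_advice_on {0, 1, 2} marked_palindromes"
proof
  assume "reg_advice_on {0, 1, 2} marked_palindromes"
  then obtain m where bound:
    "\<And>k l X. X \<subseteq> {x \<in> lists {0, 1, 2}. length x = k} \<Longrightarrow>
       separable_by_suffixes {0, 1, 2} marked_palindromes l X \<Longrightarrow> card X \<le> m"
    by (rule reg_advice_on_separable_words_bounded) blast
  define W where "W = {w. set w \<subseteq> {0, 1 :: nat} \<and> length w = m}"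
  have "card W \<le> m"
  proof (rule bound)
    show "W \<subseteq> {x \<in> lists {0, 1, 2}. length x = m}" unfolding W_def by auto
    show "separable_by_suffixes {0, 1, 2} marked_palindromes (m + 1) W"
      unfolding separable_by_suffixes_def
    proof (intro ballI impI)
      fix x y assume "x \<in> W" "y \<in> W" "x \<noteq> y"
      have "x @ 2 # rev x \<in> marked_palindromes"
        using \<open>x \<in> W\<close> unfolding marked_palindromes_def W_def by auto
      moreover have "y @ 2 # rev x \<notin> marked_palindromes"
      proof
        assume "y @ 2 # rev x \<in> marked_palindromes"
        then obtain w where w: "y @ 2 # rev x = w @ 2 # rev w" unfolding marked_palindromes_def by auto
        have "length (y @ 2 # rev x) = length (w @ 2 # rev w)" using w by (rule arg_cong)
        moreover have "length y = length x" using \<open>x \<in> W\<close> \<open>y \<in> W\<close> unfolding W_def by simp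
        ultimately have "length y = length w" by simp
        with w have "y = w" "x = w" by (simp_all add: append_eq_append_conv)
        then show False using \<open>x \<noteq> y\<close> by simp
      qed
      moreover have "2 # rev x \<in> lists {0, 1, 2}" "length (2 # rev x) = m + 1"
        using \<open>x \<in> W\<close> unfolding W_def by auto
      ultimately show "\<exists>z \<in> lists {0, 1, 2}. length z = m + 1 \<and>
          (x @ z \<in> marked_palindromes) \<noteq> (y @ z \<in> marked_palindromes)" by blast
    qed
  qed
  moreover have "card W = 2 ^ m"
    unfolding W_def using card_lists_length_eq[of "{0, 1 :: nat}" m] by (simp add: numeral_2_eq_2)
  ultimately show False using less_exp[of m] by simp
qed

definition palindrome_dpda :: "nat dpda_trans" where
  "palindrome_dpda q x Z =
    (if q = 0 then
       (case x of
          Some a \<Rightarrow>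
            if a \<in> {0, 1} \<and> Z \<in> {0, 1, 2} then Some (0, [a, Z])
            else if a = 2 \<and> Z \<in> {0, 1, 2} then Some (1, [Z]) else None
        | None \<Rightarrow> None)
     else if q = 1 then
       (case x of
          Some a \<Rightarrow> if a \<in> {0, 1} \<and> Z = a then Some (1, []) else None
        | None \<Rightarrow> if Z = 2 then Some (2, [2]) else None)
     else None)"

abbreviation palindrome_step :: "nat \<times> nat list \<times> nat list \<Rightarrow> nat \<times> nat list \<times> nat list \<Rightarrow> bool" where
  "palindrome_step \<equiv> pda_step palindrome_dpda"

lemma is_dpda_palindrome_dpda: "is_dpda {0, 1, 2} {0, 1, 2} {0, 1, 2} palindrome_dpda 0 2 {2}"
  unfolding is_dpda_def palindrome_dpda_def by (auto split: if_splits option.splits)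

definition palindrome_run_inv :: "nat list \<Rightarrow> nat \<times> nat list \<times> nat list \<Rightarrow> bool" where
  "palindrome_run_inv x c \<longleftrightarrow>
     (\<exists>p u. set p \<subseteq> {0, 1} \<and> x = p @ u \<and> c = (0, u, rev p @ [2])) \<or>
     (\<exists>w v t u. set w \<subseteq> {0, 1} \<and> rev w = v @ t \<and> x = w @ 2 # v @ u \<and> c = (1, u, t @ [2])) \<or>
     (\<exists>w u. set w \<subseteq> {0, 1} \<and> x = w @ 2 # rev w @ u \<and> c = (2, u, [2]))"

lemma palindrome_run_inv_push_step:
  assumes "palindrome_step (0, u, rev p @ [2]) c'" "set p \<subseteq> {0, 1}" "x = p @ u"
  shows "palindrome_run_inv x c'"
proof -
  from assms(1) obtain a u' Z g q b where step:
    "u = a # u'" "Z # g = rev p @ [2]" "c' = (q, u', b @ g)" "palindrome_dpda 0 (Some a) Z = Some (q, b)"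
    unfolding pda_step_def palindrome_dpda_def by (auto split: if_splits)
  have "Z \<in> {0, 1, 2}"
    using step(2) assms(2) by (cases "rev p") (auto dest!: arg_cong[of _ _ set])
  then consider "a \<in> {0, 1}" "q = 0" "b = [a, Z]" | "a = 2" "q = 1" "b = [Z]"
    using step(4) unfolding palindrome_dpda_def by (auto split: if_splits)
  then show ?thesis
  proof cases
    case 1
    then have "c' = (0, u', rev (p @ [a]) @ [2])" "x = (p @ [a]) @ u'" "set (p @ [a]) \<subseteq> {0, 1}"
      using step assms by auto
    then show ?thesis unfolding palindrome_run_inv_def by blast
  next
    case 2
    then have "c' = (1, u', rev p @ [2])" "x = p @ 2 # [] @ u'" using step assms by auto
    then show ?thesis unfolding palindrome_run_inv_def using assms(2) by fastforce
  qed
qed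

lemma palindrome_run_inv_pop_step:
  assumes "palindrome_step (1, u, t @ [2]) c'"
    "set w \<subseteq> {0, 1}" "rev w = v @ t" "x = w @ 2 # v @ u"
  shows "palindrome_run_inv x c'"
proof -
  have t: "set t \<subseteq> {0, 1}" using assms(2,3) by (metis Un_subset_iff set_append set_rev)
  from assms(1) consider
    (read) a u' Z g b where "u = a # u'" "Z # g = t @ [2]" "c' = (1, u', b @ g)"
      "palindrome_dpda 1 (Some a) Z = Some (1, b)"
  | (eps) Z g b where "Z # g = t @ [2]" "c' = (2, u, b @ g)" "palindrome_dpda 1 None Z = Some (2, b)"
    unfolding pda_step_def palindrome_dpda_def by (auto split: if_splits)
  then show ?thesis
  proof cases
    case read
    then have "Z = a" "b = []" unfolding palindrome_dpda_def by (auto split: if_splits)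
    moreover have "Z \<noteq> 2" using read(4) unfolding palindrome_dpda_def by (auto split: if_splits)
    ultimately obtain t' where "t = a # t'" "g = t' @ [2]" using read(2) by (cases t) auto
    then have "c' = (1, u', t' @ [2])" "rev w = (v @ [a]) @ t'" "x = w @ 2 # (v @ [a]) @ u'"
      using read assms \<open>b = []\<close> by auto
    then show ?thesis unfolding palindrome_run_inv_def using assms(2) by blast
  next
    case eps
    then have "Z = 2" "b = [2]" unfolding palindrome_dpda_def by (auto split: if_splits)
    then have "t = []" using eps(1) t by (cases t) auto
    then have "c' = (2, u, [2])" "x = w @ 2 # rev w @ u" using eps assms \<open>b = [2]\<close> by auto
    then show ?thesis unfolding palindrome_run_inv_def using assms(2) by blast
  qed
qed

lemma palindrome_run_inv_steps:
  assumes "palindrome_step\<^sup>*\<^sup>* c c'" "palindrome_run_inv x c"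
  shows "palindrome_run_inv x c'"
  using assms
proof (induction rule: rtranclp_induct)
  case (step c' c'')
  then have "palindrome_run_inv x c'" by blast
  then show ?case
    unfolding palindrome_run_inv_def[of x c']
  proof (elim disjE exE conjE)
    fix w u assume "c' = (2, u, [2])"
    then show ?thesis using step(2) unfolding pda_step_def palindrome_dpda_def by auto
  qed (use step(2) palindrome_run_inv_push_step palindrome_run_inv_pop_step in blast)+
qed

lemma palindrome_push_run:
  "set p \<subseteq> {0, 1} \<Longrightarrow> set s \<subseteq> {0, 1} \<Longrightarrow>
     palindrome_step\<^sup>*\<^sup>* (0, p @ u, s @ [2]) (0, u, rev p @ s @ [2])"
proof (induction p arbitrary: s)
  case (Cons a p)
  have "palindrome_step (0, a # p @ u, s @ [2]) (0, p @ u, (a # s) @ [2])"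
    using Cons.prems unfolding pda_step_def palindrome_dpda_def by (cases s) auto
  moreover have "palindrome_step\<^sup>*\<^sup>* (0, p @ u, (a # s) @ [2]) (0, u, rev p @ (a # s) @ [2])"
    using Cons.IH[of "a # s"] Cons.prems by simp
  ultimately show ?case by (simp add: converse_rtranclp_into_rtranclp)
qed simp

lemma palindrome_pop_run: "set v \<subseteq> {0, 1} \<Longrightarrow> palindrome_step\<^sup>*\<^sup>* (1, v @ u, v @ g) (1, u, g)"
proof (induction v)
  case (Cons a v)
  have "palindrome_step (1, a # v @ u, a # v @ g) (1, v @ u, v @ g)"
    using Cons.prems unfolding pda_step_def palindrome_dpda_def by auto
  then show ?case using Cons by (simp add: converse_rtranclp_into_rtranclp)
qed simp

lemma palindrome_accepting_run:
  assumes "set w \<subseteq> {0, 1}"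
  shows "palindrome_step\<^sup>*\<^sup>* (0, w @ 2 # rev w, [2]) (2, [], [2])"
proof -
  have "palindrome_step\<^sup>*\<^sup>* (0, w @ 2 # rev w, [2]) (0, 2 # rev w, rev w @ [2])"
    using palindrome_push_run[of w "[]"] assms by simp
  also have "palindrome_step (0, 2 # rev w, rev w @ [2]) (1, rev w, rev w @ [2])"
    using assms unfolding pda_step_def palindrome_dpda_def
    by (cases "rev w") (auto dest!: arg_cong[of _ _ set])
  also have "palindrome_step\<^sup>*\<^sup>* (1, rev w, rev w @ [2]) (1, [], [2])"
    using palindrome_pop_run[of "rev w" "[]" "[2]"] assms by simp
  also have "palindrome_step (1, [], [2]) (2, [], [2])"
    unfolding pda_step_def palindrome_dpda_def by auto
  finally show ?thesis by simp
qed

lemma dpda_lang_palindrome_dpda: "dpda_lang {0, 1, 2} palindrome_dpda 0 2 {2} = marked_palindromes"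
proof
  show "dpda_lang {0, 1, 2} palindrome_dpda 0 2 {2} \<subseteq> marked_palindromes"
  proof
    fix x assume "x \<in> dpda_lang {0, 1, 2} palindrome_dpda 0 2 {2}"
    then obtain g where "palindrome_step\<^sup>*\<^sup>* (0, x, [2]) (2, [], g)"
      unfolding dpda_lang_def by auto
    moreover have "palindrome_run_inv x (0, x, [2])"
      unfolding palindrome_run_inv_def by (rule disjI1, rule exI[of _ "[]"]) simp
    ultimately have "palindrome_run_inv x (2, [], g)" by (rule palindrome_run_inv_steps)
    then show "x \<in> marked_palindromes"
      unfolding palindrome_run_inv_def marked_palindromes_def by auto
  qed
next
  show "marked_palindromes \<subseteq> dpda_lang {0, 1, 2} palindrome_dpda 0 2 {2}"
    unfolding marked_palindromes_def dpda_lang_def using palindrome_accepting_run by fastforce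
qed

theorem proposition3p6:
  shows "\<exists>(\<Sigma>::nat set) (L::nat list set). finite \<Sigma> \<and> dcfl_on \<Sigma> L \<and> \<not> reg_advice_on \<Sigma> L"
proof (intro exI conjI)
  show "finite {0, 1, 2 :: nat}" by simp
  show "dcfl_on {0, 1, 2} marked_palindromes"
    unfolding dcfl_on_def using is_dpda_palindrome_dpda dpda_lang_palindrome_dpda by metis
  show "\<not> reg_advice_on {0, 1, 2} marked_palindromes"
    by (rule marked_palindromes_not_reg_advice)
qed

end
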